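(* Let $T(n) = (3n+1)/2^{v_2(3n+1)}$ for odd $n\ge1$, let $n_0$ be an odd positive integer with orbit $n_{t+1} = T(n_t)$, and let $X_t = \mathbf{1}[n_t \equiv 1 \pmod 4]$. Let $t \ge 1$ be a burst-to-gap transition, i.e. $X_{t-1} = 1$ and $X_t = 0$, and let $G \ge 1$ be the length of the gap run starting at $t$ (the number of consecutive indices $s \ge t$ with $X_s = 0$). Then $n_t \equiv 3 \pmod 4$, and moreover: (a) $G = 1$ if and only if $n_t \equiv 3 \pmod 8$; (b) $G \ge 2$ if and only if $n_t \equiv 7 \pmod 8$.
   Context: $v_2$ denotes the $2$-adic valuation. $X_t = 1$ is called a burst step and $X_t = 0$ a gap step; equivalently $X_t = \mathbf{1}[v_2(3n_t+1)\ge 2]$. *)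

theory Defs
  imports "HOL-Computational_Algebra.Computational_Algebra"
begin

definition v2 :: "nat \<Rightarrow> nat" where
  "v2 m = multiplicity (2::nat) m"

definition syr :: "nat \<Rightarrow> nat" where
  "syr n = (3 * n + 1) div 2 ^ v2 (3 * n + 1)"

definition orbit :: "nat \<Rightarrow> nat \<Rightarrow> nat" where
  "orbit n0 t = (syr ^^ t) n0"

definition burst :: "nat \<Rightarrow> nat \<Rightarrow> bool" where
  "burst n0 t \<longleftrightarrow> orbit n0 t mod 4 = 1"

end

theory Submission
  imports Defs
begin

text \<open>A gap value \<open>n \<equiv> 3 (mod 4)\<close> has \<open>v\<^sub>2(3n+1) = 1\<close>, so \<open>T(n) = (3n+1)/2\<close>;
  writing \<open>n = 8k + r\<close> gives \<open>T(n) = 12k + (3r+1)/2\<close>, which is \<open>1 (mod 4)\<close> for \<open>r = 3\<close>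
  and \<open>3 (mod 4)\<close> for \<open>r = 7\<close>.\<close>

lemma odd_syr: "odd (syr n)"
  unfolding syr_def v2_def
  using multiplicity_decompose[where p = "2::nat" and x = "3 * n + 1"] by simp

lemma orbit_Suc: "orbit n0 (Suc s) = syr (orbit n0 s)"
  unfolding orbit_def by simp

lemma odd_orbit_Suc: "odd (orbit n0 (Suc s))"
  unfolding orbit_Suc by (rule odd_syr)

lemma v2_3n1_eq_1:
  assumes "n mod 4 = 3"
  shows "v2 (3 * n + 1) = 1"
proof -
  obtain k where "n = 4 * k + 3"
    using assms by (metis div_mod_decomp mult.commute)
  then have "3 * n + 1 = 2 * (6 * k + 5)" by simp
  then show ?thesis
    unfolding v2_def
    by (simp only:) (subst multiplicity_times_same; auto intro: not_dvd_imp_multiplicity_0)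
qed

lemma syr_eq_half:
  assumes "n mod 4 = 3"
  shows "syr n = (3 * n + 1) div 2"
  unfolding syr_def v2_3n1_eq_1[OF assms] by simp

lemma syr_mod_4_eq_1_iff:
  assumes "n mod 4 = 3"
  shows "syr n mod 4 = 1 \<longleftrightarrow> n mod 8 = 3"
  unfolding syr_eq_half[OF assms] using assms by presburger

theorem lemma4p1:
  fixes n0 t G :: nat
  assumes "odd n0" and "n0 \<ge> 1"
    and "t \<ge> 1"
    and "burst n0 (t - 1)" and "\<not> burst n0 t"
    and "G \<ge> 1"
    and "\<forall>s. t \<le> s \<and> s < t + G \<longrightarrow> \<not> burst n0 s"
    and "burst n0 (t + G)"
  shows "orbit n0 t mod 4 = 3
    \<and> (G = 1 \<longleftrightarrow> orbit n0 t mod 8 = 3)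
    \<and> (G \<ge> 2 \<longleftrightarrow> orbit n0 t mod 8 = 7)"
proof -
  define m where "m = orbit n0 t"
  have "odd m"
    using assms(3) odd_orbit_Suc[of n0 "t - 1"] by (simp add: m_def)
  moreover have "m mod 4 \<noteq> 1"
    using assms(5) by (simp add: burst_def m_def)
  ultimately have m_mod_4: "m mod 4 = 3" by presburger
  have burst_next: "burst n0 (Suc t) \<longleftrightarrow> m mod 8 = 3"
    unfolding burst_def orbit_Suc m_def[symmetric] using syr_mod_4_eq_1_iff[OF m_mod_4] .
  have "G = 1 \<longleftrightarrow> burst n0 (Suc t)"
  proof
    assume "G = 1"
    then show "burst n0 (Suc t)" using assms(8) by simp
  next
    assume "burst n0 (Suc t)"
    then have "\<not> Suc t < t + G" using assms(7) by auto
    then show "G = 1" using assms(6) by simp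
  qed
  then have "G = 1 \<longleftrightarrow> m mod 8 = 3"
    using burst_next by simp
  moreover have "m mod 8 = 3 \<or> m mod 8 = 7"
    using m_mod_4 by presburger
  moreover have "G \<ge> 2 \<longleftrightarrow> G \<noteq> 1"
    using assms(6) by linarith
  ultimately show ?thesis
    using m_mod_4 unfolding m_def[symmetric] by fastforce
qed

end
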